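(* Let $\mathcal{T}$ be a triangulation of a marked surface $(S,V)$. Then $D_f(\mathcal{T})\subset Q_f(\mathcal{T})$; that is, if $(\mathbf{I},\mathbf{r})\in\mathbb{R}^{E(\mathcal{T})}_{>1}\times\mathbb{R}^V_{>0}$ satisfies the local weighted Delaunay inequality on every edge of $\mathcal{T}$, then the lengths $L_f(\mathbf{I},\mathbf{r})$ satisfy the triangle inequalities on every face of $\mathcal{T}$ (so they define a piecewise flat metric).
   Context: A marked surface $(S,V)$: closed oriented surface $S$, nonempty finite $V=\{v_1,\dots,v_n\}$, $\chi(S\setminus V)<0$; a triangulation $\mathcal{T}$ is a $\Delta$-complex decomposition with $0$-cells $V$ (up to isotopy fixing $V$), with edges $E(\mathcal{T})$. For $(\mathbf{I},\mathbf{r})\in\mathbb{R}^{E(\mathcal{T})}_{>1}\times\mathbb{R}^V_{>0}$, $L_f(\mathbf{I},\mathbf{r})(e_{ij})=\sqrt{r_i^2+r_j^2+2I_{ij}r_ir_j}$. $Q_f(\mathcal{T})$ is the set of $(\mathbf{I},\mathbf{r})$ for which $L_f(\mathbf{I},\mathbf{r})$ satisfies the strict triangle inequality on every face. Local weighted Delaunay inequality at an edge $e_{ij}$ with adjacent faces $f_{ijk},f_{ijl}$ (hinge $\Diamond_{ij;kl}$): with $p=r_k,q=r_i,r=r_l,s=r_j$, $a=I_{ki},b=I_{il},c=I_{lj},d=I_{jk},e=I_{ij}$, $\Delta_{xyz}=x^2+y^2+z^2+2xyz-1$, $f=\frac{ab+cd+ace+bde+\sqrt{\Delta_{ade}}\sqrt{\Delta_{bce}}}{e^2-1}$,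 it is the inequality $\frac{\sqrt{\Delta_{bce}}}{p}+\frac{\sqrt{\Delta_{ade}}}{r}\le\frac{\sqrt{\Delta_{cdf}}}{q}+\frac{\sqrt{\Delta_{abf}}}{s}$. $D_f(\mathcal{T})$ is the set of $(\mathbf{I},\mathbf{r})\in\mathbb{R}^{E(\mathcal{T})}_{>1}\times\mathbb{R}^V_{>0}$ satisfying it at every edge. *)

theory Defs
  imports Complex_Main
begin

text \<open>
Combinatorial model of a triangulation (Delta-complex) of a closed oriented surface
with vertex set V.  The triangulation is given by a finite set D of darts (oriented
sides of triangles), a permutation nxt of order 3 (next side in the same oriented face),
a fixed-point-free involution opp (the edge gluing, orientation reversing) and a
tail map assigning to each dart its initial vertex.  Faces are nxt-orbits, edges are
opp-orbits, vertices are the values of tail; two darts have the same tail exactly when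
they lie in the same orbit of the rotation around a vertex, d |-> nxt (opp d), so that
the quotient space is a closed surface.
\<close>

definition edge_of :: "('d \<Rightarrow> 'd) \<Rightarrow> 'd \<Rightarrow> 'd set" where
  "edge_of opp d = {d, opp d}"

definition face_of :: "('d \<Rightarrow> 'd) \<Rightarrow> 'd \<Rightarrow> 'd set" where
  "face_of nxt d = {d, nxt d, nxt (nxt d)}"

definition tri_edges :: "'d set \<Rightarrow> ('d \<Rightarrow> 'd) \<Rightarrow> 'd set set" where
  "tri_edges D opp = edge_of opp ` D"

definition tri_faces :: "'d set \<Rightarrow> ('d \<Rightarrow> 'd) \<Rightarrow> 'd set set" where
  "tri_faces D nxt = face_of nxt ` D"

definition triangulation ::
  "'d set \<Rightarrow> ('d \<Rightarrow> 'd) \<Rightarrow> ('d \<Rightarrow> 'd) \<Rightarrow> ('d \<Rightarrow> 'v) \<Rightarrow> 'v set \<Rightarrow> bool" where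
  "triangulation D nxt opp tail V \<longleftrightarrow>
     finite D \<and> D \<noteq> {} \<and>
     (\<forall>d\<in>D. nxt d \<in> D \<and> nxt d \<noteq> d \<and> nxt (nxt (nxt d)) = d) \<and>
     (\<forall>d\<in>D. opp d \<in> D \<and> opp d \<noteq> d \<and> opp (opp d) = d) \<and>
     (\<forall>d\<in>D. tail (opp d) = tail (nxt d)) \<and>
     (\<forall>d\<in>D. \<forall>d'\<in>D. tail d = tail d' \<longleftrightarrow> (\<exists>n. ((\<lambda>x. nxt (opp x)) ^^ n) d = d')) \<and>
     (\<forall>d\<in>D. \<forall>d'\<in>D. (d, d') \<in> {(x, y). x \<in> D \<and> (y = nxt x \<or> y = opp x)}\<^sup>*) \<and>
     V = tail ` D \<and>
     \<comment> \<open>chi(S minus V) = |F| - |E| < 0\<close>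
     card (tri_faces D nxt) < card (tri_edges D opp)"

definition Lf :: "('d \<Rightarrow> 'd) \<Rightarrow> ('d \<Rightarrow> 'd) \<Rightarrow> ('d \<Rightarrow> 'v)
     \<Rightarrow> ('d set \<Rightarrow> real) \<Rightarrow> ('v \<Rightarrow> real) \<Rightarrow> 'd \<Rightarrow> real" where
  "Lf nxt opp tail I r d =
     sqrt ((r (tail d))\<^sup>2 + (r (tail (nxt d)))\<^sup>2
           + 2 * I (edge_of opp d) * r (tail d) * r (tail (nxt d)))"

definition params :: "'d set \<Rightarrow> ('d \<Rightarrow> 'd) \<Rightarrow> 'v set
     \<Rightarrow> (('d set \<Rightarrow> real) \<times> ('v \<Rightarrow> real)) set" where
  "params D opp V = {(I, r). (\<forall>e\<in>tri_edges D opp. I e > 1) \<and> (\<forall>v\<in>V. r v > 0)}"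

text \<open>Q_f(T): strict triangle inequalities on every face (all three rotations of each
face are covered by quantifying over all darts).\<close>
definition Qf :: "'d set \<Rightarrow> ('d \<Rightarrow> 'd) \<Rightarrow> ('d \<Rightarrow> 'd) \<Rightarrow> ('d \<Rightarrow> 'v) \<Rightarrow> 'v set
     \<Rightarrow> (('d set \<Rightarrow> real) \<times> ('v \<Rightarrow> real)) set" where
  "Qf D nxt opp tail V = {(I, r). (I, r) \<in> params D opp V \<and>
     (\<forall>d\<in>D. Lf nxt opp tail I r d
              < Lf nxt opp tail I r (nxt d) + Lf nxt opp tail I r (nxt (nxt d)))}"

definition Dlt :: "real \<Rightarrow> real \<Rightarrow> real \<Rightarrow> real" where
  "Dlt x y z = x\<^sup>2 + y\<^sup>2 + z\<^sup>2 + 2 * x * y * z - 1"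

definition fpar :: "real \<Rightarrow> real \<Rightarrow> real \<Rightarrow> real \<Rightarrow> real \<Rightarrow> real" where
  "fpar a b c d e =
     (a * b + c * d + a * c * e + b * d * e + sqrt (Dlt a d e) * sqrt (Dlt b c e)) / (e\<^sup>2 - 1)"

definition local_wDelaunay :: "real \<Rightarrow> real \<Rightarrow> real \<Rightarrow> real
     \<Rightarrow> real \<Rightarrow> real \<Rightarrow> real \<Rightarrow> real \<Rightarrow> real \<Rightarrow> bool" where
  "local_wDelaunay p q r s a b c d e \<longleftrightarrow>
     (let f = fpar a b c d e in
       sqrt (Dlt b c e) / p + sqrt (Dlt a d e) / r
         \<le> sqrt (Dlt c d f) / q + sqrt (Dlt a b f) / s)"

text \<open>Local weighted Delaunay condition at the edge of dart d.  d runs from i to j in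
face f_ijk; opp d runs from j to i in the adjacent face f_jil.\<close>
definition delaunay_at :: "('d \<Rightarrow> 'd) \<Rightarrow> ('d \<Rightarrow> 'd) \<Rightarrow> ('d \<Rightarrow> 'v)
     \<Rightarrow> ('d set \<Rightarrow> real) \<Rightarrow> ('v \<Rightarrow> real) \<Rightarrow> 'd \<Rightarrow> bool" where
  "delaunay_at nxt opp tail I r d \<longleftrightarrow>
     (let i = tail d; j = tail (nxt d); k = tail (nxt (nxt d));
          l = tail (nxt (nxt (opp d)));
          E = edge_of opp
      in local_wDelaunay (r k) (r i) (r l) (r j)
           (I (E (nxt (nxt d)))) (I (E (nxt (opp d))))
           (I (E (nxt (nxt (opp d))))) (I (E (nxt d))) (I (E d)))"

definition Df :: "'d set \<Rightarrow> ('d \<Rightarrow> 'd) \<Rightarrow> ('d \<Rightarrow> 'd) \<Rightarrow> ('d \<Rightarrow> 'v) \<Rightarrow> 'v set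
     \<Rightarrow> (('d set \<Rightarrow> real) \<times> ('v \<Rightarrow> real)) set" where
  "Df D nxt opp tail V = {(I, r). (I, r) \<in> params D opp V \<and>
     (\<forall>d\<in>D. delaunay_at nxt opp tail I r d)}"

end

theory Submission
  imports Defs
begin

(* For a face with radii x, y, z at its vertices, the form tri_Y (affine in z) satisfies a
   Heron-type identity: its square minus Dlt * |xy|^2 * z^2 is a negative multiple of the squared
   area.  So |tri_Y| >= sqrt Dlt * |xy| * z exactly when the face is degenerate, and tri_Y is
   nonnegative when xy is the long side.  Clearing denominators, the local Delaunay inequality at
   an edge says that a positive combination of the values of tri_Y on the two faces of its hinge
   is nonpositive.  Hence if one face is degenerate with the shared edge as its long side, the
   other face is degenerate with one of its two other sides, longer than the shared edge, as its
   long side.  A degenerate face whose long side is maximal among all degenerate faces therefore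
   cannot exist. *)

definition edge_len :: "real \<Rightarrow> real \<Rightarrow> real \<Rightarrow> real" where
  "edge_len x y I = sqrt (x\<^sup>2 + y\<^sup>2 + 2 * I * x * y)"

lemma edge_len_commute: "edge_len x y I = edge_len y x I"
  unfolding edge_len_def by (simp add: algebra_simps)

lemma edge_len_pos: "x > 0 \<Longrightarrow> y > 0 \<Longrightarrow> I \<ge> 0 \<Longrightarrow> edge_len x y I > 0"
  unfolding edge_len_def by (simp add: add_pos_nonneg)

lemma edge_len_sq:
  "x \<ge> 0 \<Longrightarrow> y \<ge> 0 \<Longrightarrow> I \<ge> 0 \<Longrightarrow> (edge_len x y I)\<^sup>2 = x\<^sup>2 + y\<^sup>2 + 2 * I * x * y"
  unfolding edge_len_def by (simp add: zero_le_mult_iff)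

lemma edge_len_mono_right:
  "x \<ge> 0 \<Longrightarrow> 0 \<le> y' \<Longrightarrow> y' \<le> y \<Longrightarrow> I \<ge> 0 \<Longrightarrow> edge_len x y' I \<le> edge_len x y I"
  unfolding edge_len_def
  by (intro real_sqrt_le_mono add_mono power_mono mult_left_mono mult_right_mono) auto

lemma Dlt_pos:
  assumes "a > 1" "d > 1" "e > 1"
  shows "Dlt a d e > 0"
proof -
  have "a\<^sup>2 > 1" "a * d * e > 0" using assms by (simp_all add: one_less_power)
  moreover have "d\<^sup>2 \<ge> 0" "e\<^sup>2 \<ge> 0" by simp_all
  ultimately show ?thesis unfolding Dlt_def by linarith
qed

lemma Dlt_commute: "Dlt x y z = Dlt y x z"
  unfolding Dlt_def by (simp add: algebra_simps)

lemma heron_product_pos_iff: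
  fixes l1 l2 l3 :: real
  assumes "l1 \<ge> 0" "l2 \<ge> 0" "l3 \<ge> 0"
  shows "((l2 + l3)\<^sup>2 - l1\<^sup>2) * (l1\<^sup>2 - (l2 - l3)\<^sup>2) > 0 \<longleftrightarrow>
         l1 < l2 + l3 \<and> l2 < l3 + l1 \<and> l3 < l1 + l2"
proof -
  define u v w where "u = l2 + l3 - l1" and "v = l3 + l1 - l2" and "w = l1 + l2 - l3"
  have "((l2 + l3)\<^sup>2 - l1\<^sup>2) * (l1\<^sup>2 - (l2 - l3)\<^sup>2) = (l1 + l2 + l3) * (u * v * w)"
    unfolding u_def v_def w_def by (simp add: power2_eq_square algebra_simps)
  moreover have "u + v \<ge> 0" "v + w \<ge> 0" "w + u \<ge> 0" "l1 + l2 + l3 \<ge> 0"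
    using assms unfolding u_def v_def w_def by simp_all
  then have uvw_pos_iff: "u * v * w > 0 \<longleftrightarrow> u > 0 \<and> v > 0 \<and> w > 0"
  proof (intro iffI)
    assume "u * v * w > 0"
    moreover have "u * v * w \<le> 0" if "u \<le> 0 \<or> v \<le> 0 \<or> w \<le> 0"
    proof -
      from that consider "u \<le> 0" | "v \<le> 0" | "w \<le> 0" by blast
      then show ?thesis
      proof cases
        case 1
        then have "v \<ge> 0" "w \<ge> 0" using \<open>u + v \<ge> 0\<close> \<open>w + u \<ge> 0\<close> by simp_all
        then show ?thesis using 1 by (simp add: mult.assoc mult_nonpos_nonneg)
      next
        case 2
        then have "u \<ge> 0" "w \<ge> 0" using \<open>u + v \<ge> 0\<close> \<open>v + w \<ge> 0\<close> by simp_all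
        then show ?thesis using 2 by (simp add: mult_nonneg_nonpos mult_nonpos_nonneg)
      next
        case 3
        then have "u \<ge> 0" "v \<ge> 0" using \<open>w + u \<ge> 0\<close> \<open>v + w \<ge> 0\<close> by simp_all
        then show ?thesis using 3 by (simp add: mult_nonneg_nonpos)
      qed
    qed
    ultimately show "u > 0 \<and> v > 0 \<and> w > 0" by linarith
  qed simp
  moreover have "(l1 + l2 + l3) * (u * v * w) > 0 \<longleftrightarrow> u * v * w > 0"
    using \<open>l1 + l2 + l3 \<ge> 0\<close> uvw_pos_iff
    by (auto simp: zero_less_mult_iff u_def v_def w_def)
  ultimately show ?thesis
    unfolding u_def v_def w_def by auto
qed

(* Weight e on the side xy, a on zx, d on yz of a face whose vertices carry the radii x, y, z. *)
definition tri_Y :: "real \<Rightarrow> real \<Rightarrow> real \<Rightarrow> real \<Rightarrow> real \<Rightarrow> real \<Rightarrow> real" where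
  "tri_Y e a d x y z = (e\<^sup>2 - 1) * x * y - (a + d * e) * y * z - (d + a * e) * x * z"

lemma tri_Y_heron:
  fixes x y z e a d :: real
  assumes "x > 0" "y > 0" "z > 0" "e > 1" "a > 1" "d > 1"
  defines "l1 \<equiv> edge_len x y e" and "l2 \<equiv> edge_len y z d" and "l3 \<equiv> edge_len z x a"
  shows "4 * ((tri_Y e a d x y z)\<^sup>2 - (sqrt (Dlt a d e) * l1 * z)\<^sup>2)
    = - (e\<^sup>2 - 1) * (((l2 + l3)\<^sup>2 - l1\<^sup>2) * (l1\<^sup>2 - (l2 - l3)\<^sup>2))"
proof -
  have "l1\<^sup>2 = x\<^sup>2 + y\<^sup>2 + 2 * e * x * y" "l2\<^sup>2 = y\<^sup>2 + z\<^sup>2 + 2 * d * y * z"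
    "l3\<^sup>2 = z\<^sup>2 + x\<^sup>2 + 2 * a * z * x"
    unfolding l1_def l2_def l3_def using assms by (simp_all add: edge_len_sq)
  moreover have "(sqrt (Dlt a d e))\<^sup>2 = Dlt a d e"
    using Dlt_pos[of a d e] assms by simp
  moreover have "((l2 + l3)\<^sup>2 - l1\<^sup>2) * (l1\<^sup>2 - (l2 - l3)\<^sup>2)
      = 2 * (l1\<^sup>2 * l2\<^sup>2 + l2\<^sup>2 * l3\<^sup>2 + l3\<^sup>2 * l1\<^sup>2) - (l1\<^sup>2)\<^sup>2 - (l2\<^sup>2)\<^sup>2 - (l3\<^sup>2)\<^sup>2"
    by (simp add: power2_eq_square algebra_simps)
  ultimately show ?thesis
    unfolding tri_Y_def Dlt_def power_mult_distrib by (simp add: power2_eq_square algebra_simps)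
qed

lemma tri_Y_sq_less_iff:
  fixes x y z e a d :: real
  assumes "x > 0" "y > 0" "z > 0" "e > 1" "a > 1" "d > 1"
  defines "l1 \<equiv> edge_len x y e" and "l2 \<equiv> edge_len y z d" and "l3 \<equiv> edge_len z x a"
  shows "(tri_Y e a d x y z)\<^sup>2 < (sqrt (Dlt a d e) * l1 * z)\<^sup>2 \<longleftrightarrow>
         l1 < l2 + l3 \<and> l2 < l3 + l1 \<and> l3 < l1 + l2"
proof -
  have "e\<^sup>2 - 1 > 0" using assms by (simp add: one_less_power)
  moreover have "l1 \<ge> 0" "l2 \<ge> 0" "l3 \<ge> 0"
    unfolding l1_def l2_def l3_def using assms by (simp_all add: edge_len_def)
  ultimately show ?thesis
    using tri_Y_heron[OF assms(1-6)] heron_product_pos_iff[of l1 l2 l3]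
    unfolding l1_def l2_def l3_def by (smt (verit) mult_pos_pos mult_minus_left zero_less_mult_iff)
qed

lemma tri_Y_nonneg_if_degenerate:
  fixes x y z e a d :: real
  assumes pos: "x > 0" "y > 0" "z > 0" "e > 1" "a > 1" "d > 1"
    and degenerate: "edge_len x y e \<ge> edge_len y z d + edge_len z x a"
  shows "tri_Y e a d x y z \<ge> 0"
proof (rule ccontr)
  assume Y_neg: "\<not> tri_Y e a d x y z \<ge> 0"
  define K where "K = (a + d * e) * y + (d + a * e) * x"
  have "K > 0" unfolding K_def using pos by (simp add: add_pos_pos)
  have Y_affine: "tri_Y e a d x y t = (e\<^sup>2 - 1) * x * y - K * t" for t
    unfolding tri_Y_def K_def by (simp add: algebra_simps)
  \<comment> \<open>tri_Y decreases in z; at its zero z0 < z the face is still degenerate, which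
      contradicts tri_Y_sq_less_iff\<close>
  define z0 where "z0 = (e\<^sup>2 - 1) * x * y / K"
  have "z0 > 0" unfolding z0_def using pos \<open>K > 0\<close> by (simp add: one_less_power)
  have "tri_Y e a d x y z0 = 0"
    unfolding Y_affine z0_def using \<open>K > 0\<close> by simp
  moreover have "z0 < z"
    using Y_neg \<open>K > 0\<close> unfolding Y_affine z0_def by (simp add: field_simps)
  then have "edge_len y z0 d \<le> edge_len y z d" "edge_len z0 x a \<le> edge_len z x a"
    using pos \<open>z0 > 0\<close> edge_len_mono_right[of y z0 z d] edge_len_mono_right[of x z0 z a]
    by (simp_all add: edge_len_commute[of _ x])
  then have "\<not> (tri_Y e a d x y z0)\<^sup>2 < (sqrt (Dlt a d e) * edge_len x y e * z0)\<^sup>2"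
    using tri_Y_sq_less_iff[OF pos(1,2) \<open>z0 > 0\<close> pos(4-6)] degenerate by linarith
  moreover have "sqrt (Dlt a d e) * edge_len x y e * z0 > 0"
    using Dlt_pos[of a d e] edge_len_pos[of x y e] pos \<open>z0 > 0\<close> by simp
  ultimately show False by (metis power_zero_numeral zero_less_power)
qed

lemma tri_Y_ge_if_degenerate:
  fixes x y z e a d :: real
  assumes pos: "x > 0" "y > 0" "z > 0" "e > 1" "a > 1" "d > 1"
    and degenerate: "edge_len x y e \<ge> edge_len y z d + edge_len z x a"
  shows "tri_Y e a d x y z \<ge> sqrt (Dlt a d e) * edge_len x y e * z"
proof -
  have "(sqrt (Dlt a d e) * edge_len x y e * z)\<^sup>2 \<le> (tri_Y e a d x y z)\<^sup>2"
    using tri_Y_sq_less_iff[OF pos] degenerate by linarith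
  then show ?thesis
    using tri_Y_nonneg_if_degenerate[OF pos degenerate] by (simp add: power2_le_iff_abs_le)
qed

lemma degenerate_if_tri_Y_le:
  fixes x y z e a d :: real
  assumes pos: "x > 0" "y > 0" "z > 0" "e > 1" "a > 1" "d > 1"
    and Y_le: "tri_Y e a d x y z \<le> - (sqrt (Dlt a d e) * edge_len x y e * z)"
  shows "edge_len y z d \<ge> edge_len z x a + edge_len x y e
    \<or> edge_len z x a \<ge> edge_len x y e + edge_len y z d"
proof -
  have P_pos: "sqrt (Dlt a d e) * edge_len x y e * z > 0"
    using Dlt_pos[of a d e] edge_len_pos[of x y e] pos by simp
  then have "edge_len x y e < edge_len y z d + edge_len z x a"
    using tri_Y_nonneg_if_degenerate[OF pos] Y_le by fastforce
  moreover have "(sqrt (Dlt a d e) * edge_len x y e * z)\<^sup>2 \<le> (tri_Y e a d x y z)\<^sup>2"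
    using Y_le P_pos abs_le_square_iff by fastforce
  ultimately show ?thesis
    using tri_Y_sq_less_iff[OF pos] by linarith
qed

lemma Dlt_fpar_eq_square:
  fixes a b c d e \<alpha> \<beta> :: real
  assumes \<alpha>: "\<alpha>\<^sup>2 = Dlt a d e" and \<beta>: "\<beta>\<^sup>2 = Dlt b c e" and e: "e\<^sup>2 \<noteq> 1"
  shows "Dlt c d ((a * b + c * d + a * c * e + b * d * e + \<alpha> * \<beta>) / (e\<^sup>2 - 1))
     = ((\<alpha> * (b + c * e) + \<beta> * (a + d * e)) / (e\<^sup>2 - 1))\<^sup>2"
proof -
  define E where "E = e\<^sup>2 - 1"
  define P where "P = a * b + c * d + a * c * e + b * d * e"
  have "E \<noteq> 0" using e unfolding E_def by simp
  have "Dlt c d ((P + \<alpha> * \<beta>) / E) * E\<^sup>2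
      = (c\<^sup>2 + d\<^sup>2 - 1) * E\<^sup>2 + P\<^sup>2 + \<alpha>\<^sup>2 * \<beta>\<^sup>2 + 2 * c * d * E * P
        + 2 * (\<alpha> * \<beta>) * (P + c * d * E)"
    unfolding Dlt_def using \<open>E \<noteq> 0\<close> by (simp add: field_simps power2_eq_square)
  also have "\<dots> = Dlt a d e * (b + c * e)\<^sup>2 + Dlt b c e * (a + d * e)\<^sup>2
      + 2 * (\<alpha> * \<beta>) * ((b + c * e) * (a + d * e))"
    unfolding \<alpha> \<beta> P_def E_def Dlt_def by (simp add: power2_eq_square algebra_simps)
  also have "\<dots> = (\<alpha> * (b + c * e) + \<beta> * (a + d * e))\<^sup>2"
    unfolding \<alpha>[symmetric] \<beta>[symmetric] by (simp add: power2_eq_square algebra_simps)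
  finally show ?thesis
    using \<open>E \<noteq> 0\<close> unfolding P_def E_def by (simp add: field_simps add.assoc)
qed

lemma sqrt_Dlt_fpar:
  fixes a b c d e :: real
  assumes "a > 1" "b > 1" "c > 1" "d > 1" "e > 1"
  defines "\<alpha> \<equiv> sqrt (Dlt a d e)" and "\<beta> \<equiv> sqrt (Dlt b c e)"
  shows "sqrt (Dlt c d (fpar a b c d e)) = (\<alpha> * (b + c * e) + \<beta> * (a + d * e)) / (e\<^sup>2 - 1)"
    and "sqrt (Dlt a b (fpar a b c d e)) = (\<beta> * (d + a * e) + \<alpha> * (c + b * e)) / (e\<^sup>2 - 1)"
proof -
  have "e\<^sup>2 > 1" using assms by (simp add: one_less_power)
  have "\<alpha> > 0" "\<beta> > 0" and \<alpha>: "\<alpha>\<^sup>2 = Dlt a d e" and \<beta>: "\<beta>\<^sup>2 = Dlt b c e"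
    unfolding \<alpha>_def \<beta>_def using Dlt_pos[of a d e] Dlt_pos[of b c e] assms by simp_all
  have f: "fpar a b c d e = (a * b + c * d + a * c * e + b * d * e + \<alpha> * \<beta>) / (e\<^sup>2 - 1)"
    unfolding fpar_def \<alpha>_def \<beta>_def ..
  also have "\<dots> = (c * d + a * b + c * a * e + d * b * e + \<beta> * \<alpha>) / (e\<^sup>2 - 1)"
    by (simp add: algebra_simps)
  finally have f': "fpar a b c d e = \<dots>" .
  have "Dlt c d (fpar a b c d e) = ((\<alpha> * (b + c * e) + \<beta> * (a + d * e)) / (e\<^sup>2 - 1))\<^sup>2"
    unfolding f using Dlt_fpar_eq_square[OF \<alpha> \<beta>] \<open>e\<^sup>2 > 1\<close> by simp
  then show "sqrt (Dlt c d (fpar a b c d e)) = (\<alpha> * (b + c * e) + \<beta> * (a + d * e)) / (e\<^sup>2 - 1)"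
    using \<open>\<alpha> > 0\<close> \<open>\<beta> > 0\<close> \<open>e\<^sup>2 > 1\<close> assms by simp
  have "\<beta>\<^sup>2 = Dlt c b e" "\<alpha>\<^sup>2 = Dlt d a e" using \<alpha> \<beta> by (simp_all add: Dlt_commute)
  then have "Dlt a b (fpar a b c d e) = ((\<beta> * (d + a * e) + \<alpha> * (c + b * e)) / (e\<^sup>2 - 1))\<^sup>2"
    unfolding f' using Dlt_fpar_eq_square \<open>e\<^sup>2 > 1\<close> by simp
  then show "sqrt (Dlt a b (fpar a b c d e)) = (\<beta> * (d + a * e) + \<alpha> * (c + b * e)) / (e\<^sup>2 - 1)"
    using \<open>\<alpha> > 0\<close> \<open>\<beta> > 0\<close> \<open>e\<^sup>2 > 1\<close> assms by simp
qed

lemma local_wDelaunay_iff_tri_Y: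
  fixes p q r s a b c d e :: real
  assumes pos: "p > 0" "q > 0" "r > 0" "s > 0"
    and weights: "a > 1" "b > 1" "c > 1" "d > 1" "e > 1"
  shows "local_wDelaunay p q r s a b c d e \<longleftrightarrow>
    sqrt (Dlt b c e) * r * tri_Y e a d q s p + sqrt (Dlt a d e) * p * tri_Y e b c q s r \<le> 0"
proof -
  define \<alpha> \<beta> where "\<alpha> = sqrt (Dlt a d e)" and "\<beta> = sqrt (Dlt b c e)"
  define E where "E = e\<^sup>2 - 1"
  define S1 S2 where "S1 = (\<alpha> * (b + c * e) + \<beta> * (a + d * e)) / E"
    and "S2 = (\<beta> * (d + a * e) + \<alpha> * (c + b * e)) / E"
  have "E > 0" unfolding E_def using weights by (simp add: one_less_power)
  then have S1: "S1 * E = \<alpha> * (b + c * e) + \<beta> * (a + d * e)"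
    and S2: "S2 * E = \<beta> * (d + a * e) + \<alpha> * (c + b * e)"
    unfolding S1_def S2_def by simp_all
  have "(S1 / q + S2 / s - \<beta> / p - \<alpha> / r) * (p * q * r * s * E)
      = (S1 * E) * (p * r * s) + (S2 * E) * (p * q * r) - \<beta> * E * (q * r * s) - \<alpha> * E * (p * q * s)"
    using pos by (simp add: field_simps)
  also have "\<dots> = - (\<beta> * r * tri_Y e a d q s p + \<alpha> * p * tri_Y e b c q s r)"
    unfolding S1 S2 unfolding tri_Y_def E_def by (simp add: algebra_simps)
  finally have "(S1 / q + S2 / s - \<beta> / p - \<alpha> / r) * (p * q * r * s * E) = \<dots>" .
  moreover have "p * q * r * s * E > 0" using pos \<open>E > 0\<close> by simp
  moreover have "local_wDelaunay p q r s a b c d e \<longleftrightarrow> \<beta> / p + \<alpha> / r \<le> S1 / q + S2 / s"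
    unfolding local_wDelaunay_def Let_def sqrt_Dlt_fpar[OF weights]
    unfolding \<alpha>_def \<beta>_def E_def S1_def S2_def ..
  ultimately show ?thesis
    unfolding \<alpha>_def \<beta>_def by (smt (verit) zero_le_mult_iff)
qed

lemma degenerate_hinge:
  fixes p q r s a b c d e :: real
  assumes pos: "p > 0" "q > 0" "r > 0" "s > 0"
    and weights: "a > 1" "b > 1" "c > 1" "d > 1" "e > 1"
    and delaunay: "local_wDelaunay p q r s a b c d e"
    and degenerate: "edge_len q s e \<ge> edge_len s p d + edge_len p q a"
  shows "edge_len q r b \<ge> edge_len r s c + edge_len q s e
    \<or> edge_len r s c \<ge> edge_len q s e + edge_len q r b"
proof -
  define \<alpha> \<beta> where "\<alpha> = sqrt (Dlt a d e)" and "\<beta> = sqrt (Dlt b c e)"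
  have "\<alpha> > 0" "\<beta> > 0"
    unfolding \<alpha>_def \<beta>_def using Dlt_pos weights by simp_all
  have "tri_Y e a d q s p \<ge> \<alpha> * edge_len q s e * p"
    unfolding \<alpha>_def using tri_Y_ge_if_degenerate[of q s p e a d] pos weights degenerate by simp
  then have "\<beta> * r * (\<alpha> * edge_len q s e * p) + \<alpha> * p * tri_Y e b c q s r \<le> 0"
    using delaunay local_wDelaunay_iff_tri_Y[OF pos weights] pos \<open>\<beta> > 0\<close> \<alpha>_def \<beta>_def
    by (smt (verit) mult_left_mono mult_pos_pos)
  then have "\<alpha> * p * (tri_Y e b c q s r + \<beta> * edge_len q s e * r) \<le> 0"
    by (simp add: algebra_simps)
  then have "tri_Y e b c q s r \<le> - (\<beta> * edge_len q s e * r)"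
    using \<open>\<alpha> > 0\<close> pos by (simp add: mult_le_0_iff)
  then show ?thesis
    using degenerate_if_tri_Y_le[of q s r e b c] pos weights
    unfolding \<beta>_def by (auto simp: edge_len_commute)
qed

lemma empty_if_finite_without_maximum:
  fixes f :: "'a \<Rightarrow> 'b::linorder"
  assumes "finite B" and "\<And>x. x \<in> B \<Longrightarrow> \<exists>y\<in>B. f x < f y"
  shows "B = {}"
proof (rule ccontr)
  assume "B \<noteq> {}"
  then have "Max (f ` B) \<in> f ` B"
    using \<open>finite B\<close> by simp
  then obtain m where "m \<in> B" and "f m = Max (f ` B)"
    by auto
  with assms show False
    by (metis Max_ge finite_imageI image_eqI leD)
qed

lemma Lf_eq_edge_len:
  "Lf nxt opp tail I r d = edge_len (r (tail d)) (r (tail (nxt d))) (I (edge_of opp d))"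
  unfolding Lf_def edge_len_def ..

lemma params_weight_gt_1: "(I, r) \<in> params D opp V \<Longrightarrow> d \<in> D \<Longrightarrow> I (edge_of opp d) > 1"
  unfolding params_def tri_edges_def by blast

context
  fixes D :: "'d set" and nxt opp :: "'d \<Rightarrow> 'd" and tail :: "'d \<Rightarrow> 'v" and V :: "'v set"
  assumes tri: "triangulation D nxt opp tail V"
begin

lemma triangulation_nxt: "d \<in> D \<Longrightarrow> nxt d \<in> D \<and> nxt (nxt (nxt d)) = d"
  using tri unfolding triangulation_def by blast

lemma triangulation_opp: "d \<in> D \<Longrightarrow> opp d \<in> D \<and> opp (opp d) = d \<and> tail (opp d) = tail (nxt d)"
  using tri unfolding triangulation_def by blast

lemma params_radius_pos: "(I, r) \<in> params D opp V \<Longrightarrow> d \<in> D \<Longrightarrow> r (tail d) > 0"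
  using tri unfolding triangulation_def params_def by blast

lemma Lf_pos: "(I, r) \<in> params D opp V \<Longrightarrow> d \<in> D \<Longrightarrow> Lf nxt opp tail I r d > 0"
  unfolding Lf_eq_edge_len
  by (intro edge_len_pos) (auto dest: params_radius_pos params_weight_gt_1 triangulation_nxt)

lemma Lf_opp: "d \<in> D \<Longrightarrow> Lf nxt opp tail I r (opp d) = Lf nxt opp tail I r d"
  using triangulation_opp[of d] triangulation_opp[of "opp d"]
  unfolding Lf_eq_edge_len edge_of_def by (simp add: insert_commute edge_len_commute)

lemma delaunay_at_degenerate_opposite:
  fixes I :: "'d set \<Rightarrow> real" and r :: "'v \<Rightarrow> real"
  defines "L \<equiv> Lf nxt opp tail I r"
  assumes params: "(I, r) \<in> params D opp V" and "d \<in> D"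
    and delaunay: "delaunay_at nxt opp tail I r d"
    and degenerate: "L d \<ge> L (nxt d) + L (nxt (nxt d))"
  shows "L (nxt (opp d)) \<ge> L (nxt (nxt (opp d))) + L (opp d)
    \<or> L (nxt (nxt (opp d))) \<ge> L (opp d) + L (nxt (opp d))"
proof -
  define od where "od = opp d"
  have "nxt d \<in> D" "nxt (nxt d) \<in> D" "nxt (nxt (nxt d)) = d"
    using triangulation_nxt[of d] triangulation_nxt[of "nxt d"] \<open>d \<in> D\<close> by simp_all
  have "od \<in> D" "opp od = d" "tail od = tail (nxt d)"
    using triangulation_opp[OF \<open>d \<in> D\<close>] unfolding od_def by simp_all
  have "nxt od \<in> D" "nxt (nxt od) \<in> D" "nxt (nxt (nxt od)) = od"
    using triangulation_nxt[of od] triangulation_nxt[of "nxt od"] \<open>od \<in> D\<close> by simp_all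
  have "tail (nxt od) = tail d"
    using triangulation_opp[OF \<open>od \<in> D\<close>] \<open>opp od = d\<close> by simp
  have "L od = L d"
    using Lf_opp[OF \<open>d \<in> D\<close>] unfolding od_def L_def .
  note darts = \<open>nxt d \<in> D\<close> \<open>nxt (nxt d) \<in> D\<close> \<open>nxt od \<in> D\<close> \<open>nxt (nxt od) \<in> D\<close>
  from \<open>nxt (nxt (nxt d)) = d\<close> \<open>tail od = tail (nxt d)\<close> \<open>tail (nxt od) = tail d\<close>
  have lengths:
    "L d = edge_len (r (tail d)) (r (tail (nxt d))) (I (edge_of opp d))"
    "L (nxt d) = edge_len (r (tail (nxt d))) (r (tail (nxt (nxt d)))) (I (edge_of opp (nxt d)))"
    "L (nxt (nxt d))
       = edge_len (r (tail (nxt (nxt d)))) (r (tail d)) (I (edge_of opp (nxt (nxt d))))"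
    "L (nxt od) = edge_len (r (tail d)) (r (tail (nxt (nxt od)))) (I (edge_of opp (nxt od)))"
    "L (nxt (nxt od))
       = edge_len (r (tail (nxt (nxt od)))) (r (tail (nxt d))) (I (edge_of opp (nxt (nxt od))))"
    unfolding L_def Lf_eq_edge_len using \<open>nxt (nxt (nxt od)) = od\<close> by simp_all
  have "local_wDelaunay
      (r (tail (nxt (nxt d)))) (r (tail d)) (r (tail (nxt (nxt od)))) (r (tail (nxt d)))
      (I (edge_of opp (nxt (nxt d)))) (I (edge_of opp (nxt od))) (I (edge_of opp (nxt (nxt od))))
      (I (edge_of opp (nxt d))) (I (edge_of opp d))"
    using delaunay unfolding delaunay_at_def Let_def od_def .
  from degenerate_hinge[OF _ _ _ _ _ _ _ _ _ this]
  have "L (nxt od) \<ge> L (nxt (nxt od)) + L d \<or> L (nxt (nxt od)) \<ge> L d + L (nxt od)"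
    using degenerate darts \<open>d \<in> D\<close> params_radius_pos[OF params] params_weight_gt_1[OF params]
    unfolding lengths by (simp add: edge_len_commute)
  then show ?thesis unfolding \<open>L od = L d\<close>[symmetric] od_def .
qed

lemma degenerate_face_has_longer_degenerate:
  fixes I :: "'d set \<Rightarrow> real" and r :: "'v \<Rightarrow> real"
  defines "L \<equiv> Lf nxt opp tail I r"
  assumes "(I, r) \<in> Df D nxt opp tail V" and "d \<in> D"
    and degenerate: "L d \<ge> L (nxt d) + L (nxt (nxt d))"
  shows "\<exists>d'\<in>D. L d' \<ge> L (nxt d') + L (nxt (nxt d')) \<and> L d < L d'"
proof -
  have params: "(I, r) \<in> params D opp V" and "delaunay_at nxt opp tail I r d"
    using assms(2,3) unfolding Df_def by auto
  define od where "od = opp d"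
  have "od \<in> D" "L od = L d"
    using \<open>d \<in> D\<close> triangulation_opp Lf_opp unfolding od_def L_def by simp_all
  then have "nxt od \<in> D" "nxt (nxt od) \<in> D" "nxt (nxt (nxt od)) = od"
    using triangulation_nxt[of od] triangulation_nxt[of "nxt od"] by simp_all
  have "L (nxt od) > 0" "L (nxt (nxt od)) > 0"
    using Lf_pos[OF params] \<open>nxt od \<in> D\<close> \<open>nxt (nxt od) \<in> D\<close> unfolding L_def by simp_all
  have "L (nxt od) \<ge> L (nxt (nxt od)) + L od \<or> L (nxt (nxt od)) \<ge> L od + L (nxt od)"
    using delaunay_at_degenerate_opposite[OF params \<open>d \<in> D\<close> \<open>delaunay_at _ _ _ _ _ d\<close>] degenerate
    unfolding od_def L_def by blast
  then show ?thesis
  proof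
    assume "L (nxt od) \<ge> L (nxt (nxt od)) + L od"
    then show ?thesis
      using \<open>nxt od \<in> D\<close> \<open>nxt (nxt (nxt od)) = od\<close> \<open>L od = L d\<close> \<open>L (nxt (nxt od)) > 0\<close>
      by (intro bexI[of _ "nxt od"]) auto
  next
    assume "L (nxt (nxt od)) \<ge> L od + L (nxt od)"
    then show ?thesis
      using \<open>nxt (nxt od) \<in> D\<close> \<open>nxt (nxt (nxt od)) = od\<close> \<open>L od = L d\<close> \<open>L (nxt od) > 0\<close>
      by (intro bexI[of _ "nxt (nxt od)"]) auto
  qed
qed

end

theorem theorem4p4:
  fixes D :: "'d set" and nxt opp :: "'d \<Rightarrow> 'd" and tail :: "'d \<Rightarrow> 'v" and V :: "'v set"
  assumes "triangulation D nxt opp tail V"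
  shows "Df D nxt opp tail V \<subseteq> Qf D nxt opp tail V"
proof
  fix Ir assume "Ir \<in> Df D nxt opp tail V"
  then obtain I r where Ir: "Ir = (I, r)" and Df: "(I, r) \<in> Df D nxt opp tail V"
    by (cases Ir) auto
  define L where "L = Lf nxt opp tail I r"
  have "{d \<in> D. L d \<ge> L (nxt d) + L (nxt (nxt d))} = {}"
  proof (rule empty_if_finite_without_maximum[where f = L])
    show "finite {d \<in> D. L d \<ge> L (nxt d) + L (nxt (nxt d))}"
      using assms unfolding triangulation_def by simp
  next
    fix d assume "d \<in> {d \<in> D. L d \<ge> L (nxt d) + L (nxt (nxt d))}"
    then show "\<exists>d'\<in>{d \<in> D. L d \<ge> L (nxt d) + L (nxt (nxt d))}. L d < L d'"
      using degenerate_face_has_longer_degenerate[OF assms Df] unfolding L_def by auto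
  qed
  then show "Ir \<in> Qf D nxt opp tail V"
    using Df unfolding Ir Qf_def Df_def L_def by (auto simp: not_le)
qed

end
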